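(* Let $t>0$ and $k\ge 1$ be constants, and let $p_0,p_1,p_2,p_3$ be real numbers with $0<p_i<1$ and $\sum_{i=0}^{3}p_i=1$. Define $T(n,r)$ for real $n\ge 0$ and integers $r\ge 0$ by $$T(n,r)=\begin{cases}1 & \text{if } n\le t k^r,\\ 1+\sum_{i=0}^{3} T\big(p_i(n-tk^r),\,r+1\big) & \text{if } n> t k^r.\end{cases}$$ Then, as $N\to\infty$, $T(N,0)\in\Theta(N^s)$ for some real number $s$ with $0<s\le 1$.
   Context: $T(N,0)$ is the asymptotic space (number of counters) used by a DN-tree with parameters $k$ and $t$ after recording $N$ extent accesses: a tree vertex at level $r$ saturates at threshold $tk^r$, after which further accesses are distributed among its four children with probabilities $p_0,\dots,p_3$. The parameters $t,k,p_i$ are fixed as $N\to\infty$. *)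

theory Defs
  imports "HOL-Library.Landau_Symbols"
begin

end

theory Submission
  imports Defs
begin

text \<open>Measure a vertex at level \<open>r\<close> holding \<open>n\<close> accesses by its load \<open>n / (t k^r)\<close>.
  A saturated vertex of load \<open>m\<close> hands load \<open>q\<^sub>i (m - 1)\<close> to its \<open>i\<close>-th child, where
  \<open>q\<^sub>i = p\<^sub>i / k\<close>. Choose \<open>s \<in> (0, 1]\<close> with \<open>\<Sum> q\<^sub>i\<^sup>s = 1\<close>; it exists by the intermediate
  value theorem, since the sum is the number of children at \<open>s = 0\<close> and at most 1 at \<open>s = 1\<close>.
  Induction on the load then gives \<open>m\<^sup>s \<le> T \<le> C m\<^sup>s - 1\<close>: the lower bound follows from the
  subadditivity of \<open>x \<mapsto> x\<^sup>s\<close>, the upper bound from the fact that beyond a fixed load all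
  children are themselves saturated, with smaller loads handled by the crude bound
  \<open>T \<le> (d + 1)\<^sup>m\<close>.\<close>

lemma powr_ge_mult_powr_minus_one:
  fixes a b s :: real
  assumes "0 \<le> a" "a \<le> b" "s \<le> 1"
  shows "a * b powr (s - 1) \<le> a powr s"
proof (cases "a = 0")
  case False
  then have "a powr s = a * a powr (s - 1)"
    using assms(1) by (simp add: powr_diff)
  moreover have "b powr (s - 1) \<le> a powr (s - 1)"
    using False assms by (intro powr_mono2') auto
  ultimately show ?thesis
    using assms(1) by (simp add: mult_left_mono)
qed simp

lemma powr_add_le_add_powr:
  fixes a b s :: real
  assumes "0 \<le> a" "0 \<le> b" "s \<le> 1"
  shows "(a + b) powr s \<le> a powr s + b powr s"
proof (cases "a + b = 0")
  case False
  with assms have "(a + b) powr s = (a + b) * (a + b) powr (s - 1)"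
    by (simp add: powr_diff)
  also have "\<dots> = a * (a + b) powr (s - 1) + b * (a + b) powr (s - 1)"
    by (simp add: distrib_right)
  also have "\<dots> \<le> a powr s + b powr s"
    using assms by (intro add_mono powr_ge_mult_powr_minus_one) auto
  finally show ?thesis .
qed simp

lemma exists_powr_sum_eq_1:
  fixes q :: "'a \<Rightarrow> real"
  assumes "finite I" "1 < card I" "\<And>i. i \<in> I \<Longrightarrow> 0 < q i" "sum q I \<le> 1"
  shows "\<exists>s. 0 < s \<and> s \<le> 1 \<and> (\<Sum>i\<in>I. q i powr s) = 1"
proof -
  define f where "f s = (\<Sum>i\<in>I. q i powr s)" for s
  have "f 0 = (\<Sum>i\<in>I. 1)"
    unfolding f_def using assms(3) by (intro sum.cong) (auto simp: less_imp_neq[symmetric])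
  then have f0: "f 0 = card I"
    by simp
  have f1: "f 1 \<le> 1"
    using assms(3,4) by (simp add: f_def less_imp_le)
  have "\<forall>x. 0 \<le> x \<and> x \<le> 1 \<longrightarrow> isCont f x"
    unfolding f_def using assms(3) by (auto intro!: continuous_intros simp: less_imp_neq[symmetric])
  then obtain s where s: "0 \<le> s" "s \<le> 1" "f s = 1"
    using IVT2[of f 1 1 0] f0 f1 assms(2) by auto
  moreover have "s \<noteq> 0"
    using f0 s(3) assms(2) by auto
  ultimately show ?thesis
    unfolding f_def by (intro exI[of _ s]) auto
qed

locale dn_tree =
  fixes d :: nat and t k :: real and p :: "nat \<Rightarrow> real" and T :: "real \<Rightarrow> nat \<Rightarrow> real"
  assumes two_le_d: "2 \<le> d"
    and t_pos: "0 < t"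
    and k_ge_1: "1 \<le> k"
    and p_pos: "\<And>i. i < d \<Longrightarrow> 0 < p i \<and> p i < 1"
    and sum_p: "(\<Sum>i<d. p i) = 1"
    and T_rec: "\<And>n r. 0 \<le> n \<Longrightarrow>
       T n r = (if n \<le> t * k ^ r then 1 else 1 + (\<Sum>i<d. T (p i * (n - t * k ^ r)) (Suc r)))"
begin

definition load :: "real \<Rightarrow> nat \<Rightarrow> real"
  where "load n r = n / (t * k ^ r)"

definition child :: "nat \<Rightarrow> real \<Rightarrow> nat \<Rightarrow> real"
  where "child i n r = p i * (n - t * k ^ r)"

definition q :: "nat \<Rightarrow> real"
  where "q i = p i / k"

lemma threshold_pos: "0 < t * k ^ r"
  using t_pos k_ge_1 by simp

lemma q_pos: "i < d \<Longrightarrow> 0 < q i"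
  using p_pos[of i] k_ge_1 by (simp add: q_def)

lemma q_lt_1: "i < d \<Longrightarrow> q i < 1"
  using p_pos[of i] k_ge_1 by (simp add: q_def)

lemma sum_q_le_1: "(\<Sum>i<d. q i) \<le> 1"
  using sum_p k_ge_1 by (simp add: q_def flip: sum_divide_distrib)

lemma load_nonneg: "0 \<le> n \<Longrightarrow> 0 \<le> load n r"
  using threshold_pos[of r] by (simp add: load_def)

lemma load_child: "load (child i n r) (Suc r) = q i * (load n r - 1)"
  using t_pos k_ge_1 by (simp add: load_def child_def q_def field_simps)

lemma child_nonneg: "1 < load n r \<Longrightarrow> i < d \<Longrightarrow> 0 \<le> child i n r"
  using threshold_pos[of r] p_pos[of i] by (simp add: load_def child_def less_divide_eq)

lemma load_child_le: "1 < load n r \<Longrightarrow> i < d \<Longrightarrow> load (child i n r) (Suc r) \<le> load n r - 1"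
  using q_lt_1[of i] by (simp add: load_child mult_left_le_one_le)

lemma T_small: "0 \<le> n \<Longrightarrow> load n r \<le> 1 \<Longrightarrow> T n r = 1"
  using T_rec[of n r] threshold_pos[of r] by (simp add: load_def divide_le_eq)

lemma T_large: "0 \<le> n \<Longrightarrow> 1 < load n r \<Longrightarrow> T n r = 1 + (\<Sum>i<d. T (child i n r) (Suc r))"
  using T_rec[of n r] threshold_pos[of r] by (simp add: load_def child_def less_divide_eq)

lemma load_induct [consumes 1, case_names small large]:
  assumes "0 \<le> n"
    and small: "\<And>n r. 0 \<le> n \<Longrightarrow> load n r \<le> 1 \<Longrightarrow> P n r"
    and large: "\<And>n r. 0 \<le> n \<Longrightarrow> 1 < load n r \<Longrightarrow>
                  (\<And>i. i < d \<Longrightarrow> P (child i n r) (Suc r)) \<Longrightarrow> P n r"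
  shows "P n r"
proof -
  have "P n r" if "0 \<le> n" "load n r \<le> real N" for N n r
    using that
  proof (induction N arbitrary: n r)
    case 0
    then show ?case using small by simp
  next
    case (Suc N)
    show ?case
    proof (cases "load n r \<le> 1")
      case True
      with Suc.prems small show ?thesis by blast
    next
      case False
      show ?thesis
      proof (rule large)
        fix i assume "i < d"
        with False Suc.prems load_child_le[of n r i] show "P (child i n r) (Suc r)"
          by (intro Suc.IH child_nonneg) auto
      qed (use False Suc.prems in auto)
    qed
  qed
  then show ?thesis
    using assms(1) real_nat_ceiling_ge by blast
qed

lemma T_le_exp_load: "0 \<le> n \<Longrightarrow> T n r \<le> (d + 1) powr load n r"
proof (induction n r rule: load_induct)
  case (small n r)
  then show ?case
    using T_small load_nonneg by (simp add: ge_one_powr_ge_zero)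
next
  case (large n r)
  have "T n r = 1 + (\<Sum>i<d. T (child i n r) (Suc r))"
    using large.hyps by (rule T_large)
  also have "\<dots> \<le> 1 + (\<Sum>i<d. (d + 1) powr (load n r - 1))"
  proof (intro add_left_mono sum_mono)
    fix i assume "i \<in> {..<d}"
    then have "T (child i n r) (Suc r) \<le> (d + 1) powr load (child i n r) (Suc r)"
      using large.IH by simp
    also have "\<dots> \<le> (d + 1) powr (load n r - 1)"
      using load_child_le[OF large.hyps(2)] \<open>i \<in> {..<d}\<close> by (intro powr_mono) auto
    finally show "T (child i n r) (Suc r) \<le> (d + 1) powr (load n r - 1)" .
  qed
  also have "\<dots> \<le> (d + 1) * (d + 1) powr (load n r - 1)"
    using large.hyps(2) by (simp add: algebra_simps ge_one_powr_ge_zero)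
  also have "\<dots> = (d + 1) powr load n r"
    by (simp add: powr_diff)
  finally show ?case .
qed

definition big_load :: real
  where "big_load = 1 + (\<Sum>i<d. 1 / q i)"

lemma one_le_big_load: "1 \<le> big_load"
proof -
  have "0 \<le> (\<Sum>i<d. 1 / q i)"
    by (intro sum_nonneg) (simp add: q_pos less_imp_le)
  then show ?thesis
    by (simp add: big_load_def)
qed

lemma load_child_ge_1: "big_load < load n r \<Longrightarrow> i < d \<Longrightarrow> 1 \<le> load (child i n r) (Suc r)"
proof -
  assume "big_load < load n r" "i < d"
  moreover have "1 / q i \<le> (\<Sum>i<d. 1 / q i)"
    using \<open>i < d\<close> q_pos by (intro member_le_sum) (auto intro: less_imp_le)
  ultimately have "1 / q i \<le> load n r - 1"
    by (simp add: big_load_def)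
  then show ?thesis
    using q_pos[of i] \<open>i < d\<close> by (simp add: load_child divide_le_eq mult.commute)
qed

context
  fixes s :: real
  assumes s_pos: "0 < s" and s_le_1: "s \<le> 1" and sum_q_powr: "(\<Sum>i<d. q i powr s) = 1"
begin

lemma sum_powr_child: "0 \<le> x \<Longrightarrow> (\<Sum>i<d. (q i * x) powr s) = x powr s"
  using q_pos sum_q_powr
  by (simp add: powr_mult less_imp_le flip: sum_distrib_right cong: sum.cong)

lemma load_powr_le_T: "0 \<le> n \<Longrightarrow> load n r powr s \<le> T n r"
proof (induction n r rule: load_induct)
  case (small n r)
  then show ?case
    using T_small powr_mono2[of s "load n r" 1] load_nonneg s_pos by simp
next
  case (large n r)
  have "load n r powr s \<le> (load n r - 1) powr s + 1"
    using powr_add_le_add_powr[of "load n r - 1" 1 s] large.hyps(2) s_le_1 by simp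
  also have "\<dots> = (\<Sum>i<d. load (child i n r) (Suc r) powr s) + 1"
    using large.hyps(2) by (simp add: load_child sum_powr_child)
  also have "\<dots> \<le> (\<Sum>i<d. T (child i n r) (Suc r)) + 1"
    using large.IH by (intro add_right_mono sum_mono) auto
  also have "\<dots> = T n r"
    using T_large[OF large.hyps] by simp
  finally show ?case .
qed

text \<open>The slack \<open>-1\<close> absorbs the \<open>d - 1\<close> units a saturated vertex gains over its children;
  this is where \<open>2 \<le> d\<close> is needed.\<close>
lemma T_le_load_powr:
  "0 \<le> n \<Longrightarrow> 1 \<le> load n r \<Longrightarrow> T n r \<le> ((d + 1) powr big_load + 1) * load n r powr s - 1"
proof (induction n r rule: load_induct)
  case (small n r)
  then show ?case
    using T_small one_le_big_load by (simp add: ge_one_powr_ge_zero)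
next
  case (large n r)
  define C where "C = (d + 1) powr big_load + 1"
  have C_ge_1: "1 \<le> C"
    by (simp add: C_def)
  show ?case
  proof (cases "load n r \<le> big_load")
    case True
    have "T n r \<le> (d + 1) powr load n r"
      using large.hyps(1) by (rule T_le_exp_load)
    also have "\<dots> \<le> (d + 1) powr big_load"
      using True by (intro powr_mono) auto
    also have "\<dots> = C - 1"
      by (simp add: C_def)
    also have "\<dots> \<le> C * load n r powr s - 1"
    proof -
      have "1 \<le> load n r powr s"
        using large.hyps(2) s_pos by (intro ge_one_powr_ge_zero) auto
      then show ?thesis
        using C_ge_1 by simp
    qed
    finally show ?thesis by (simp add: C_def)
  next
    case False
    have "T n r = 1 + (\<Sum>i<d. T (child i n r) (Suc r))"
      using large.hyps by (rule T_large)
    also have "\<dots> \<le> 1 + (\<Sum>i<d. C * load (child i n r) (Suc r) powr s - 1)"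
      using large.IH load_child_ge_1[of n r] False by (intro add_left_mono sum_mono) (auto simp: C_def)
    also have "\<dots> = 1 + C * (load n r - 1) powr s - d"
      using large.hyps(2) by (simp add: sum_subtractf load_child sum_powr_child flip: sum_distrib_left)
    also have "\<dots> \<le> C * load n r powr s - 1"
    proof -
      have "(load n r - 1) powr s \<le> load n r powr s"
        using large.hyps(2) s_pos by (intro powr_mono2) auto
      then have "C * (load n r - 1) powr s \<le> C * load n r powr s"
        using C_ge_1 by (intro mult_left_mono) auto
      moreover have "2 \<le> real d"
        using two_le_d by simp
      ultimately show ?thesis
        by linarith
    qed
    finally show ?thesis by (simp add: C_def)
  qed
qed

end

theorem T_bigtheta: "\<exists>s. 0 < s \<and> s \<le> 1 \<and> (\<lambda>N. T N r) \<in> \<Theta>(\<lambda>N. N powr s)"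
proof -
  obtain s where s: "0 < s" "s \<le> 1" "(\<Sum>i<d. q i powr s) = 1"
    using exists_powr_sum_eq_1[of "{..<d}" q] two_le_d q_pos sum_q_le_1 by auto
  define c where "c = (t * k ^ r) powr s"
  define C where "C = (d + 1) powr big_load + 1"
  have "c > 0" "C > 0"
    using t_pos k_ge_1 by (simp_all add: c_def C_def add_pos_nonneg)
  have bounds: "eventually (\<lambda>N. 1 / c * norm (N powr s) \<le> norm (T N r) \<and>
                        norm (T N r) \<le> C / c * norm (N powr s)) at_top"
    using eventually_ge_at_top[of "t * k ^ r"]
  proof eventually_elim
    case (elim N)
    then have "0 \<le> N" "1 \<le> load N r"
      using threshold_pos[of r] by (auto simp: load_def)
    moreover have "load N r powr s = N powr s / c"
      using \<open>0 \<le> N\<close> threshold_pos[of r] by (simp add: load_def c_def powr_divide)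
    ultimately have "N powr s / c \<le> T N r" "T N r \<le> C * (N powr s / c)"
      using load_powr_le_T[OF s, of N r] T_le_load_powr[OF s, of N r] by (simp_all add: C_def)
    moreover have "0 \<le> N powr s / c"
      using \<open>c > 0\<close> by simp
    ultimately show ?case
      by simp
  qed
  have "(\<lambda>N. T N r) \<in> \<Theta>(\<lambda>N. N powr s)"
    by (rule bigthetaI'[OF _ _ bounds]) (use \<open>c > 0\<close> \<open>C > 0\<close> in simp_all)
  with s show ?thesis
    by blast
qed

end

theorem corollary1:
  fixes t k :: real and p :: "nat \<Rightarrow> real" and T :: "real \<Rightarrow> nat \<Rightarrow> real"
  assumes t_pos: "t > 0"
    and k_ge: "k \<ge> 1"
    and p_bounds: "\<And>i. i < 4 \<Longrightarrow> 0 < p i \<and> p i < 1"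
    and p_sum: "(\<Sum>i<4. p i) = 1"
    and T_rec: "\<And>n r. n \<ge> 0 \<Longrightarrow>
       T n r = (if n \<le> t * k ^ r then 1
                else 1 + (\<Sum>i<4. T (p i * (n - t * k ^ r)) (Suc r)))"
  shows "\<exists>s::real. 0 < s \<and> s \<le> 1 \<and> (\<lambda>N. T N 0) \<in> \<Theta>(\<lambda>N. N powr s)"
proof -
  interpret dn_tree 4 t k p T
    by (unfold_locales; (fact assms)?) simp
  show ?thesis
    by (rule T_bigtheta)
qed

end
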